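(* Let $t\in((0,1)\cup(1,\infty))\cap\mathbb Q$ be a reduced fraction. Define a word $w$ in the alphabet $\{p,q,r\}$ as follows. If $0<t<1$: for each subword of $\omega_t$ lying between two consecutive occurrences of $z^{\pm1}$, assign the letter $p$ if the subword is of the form $y^{\pm1}$ and the letter $q$ if it is of the form $y^{\pm1}x^{\pm1}y^{\pm1}$; let $w$ be the concatenation of these letters in the order in which the subwords occur in $\omega_t$. If $1<t<\infty$: for each subword of $\omega_t$ lying between two consecutive occurrences of $x^{\pm1}$, assign $q$ if the subword is of the form $y^{\pm1}z^{\pm1}y^{\pm1}$ and $r$ if it is of the form $y^{\pm1}$; let $w$ be the concatenation in order. Then the Cohn word $c_t$ satisfies $c_t=pwq$ if $0<t<1$, and $c_t=qwr$ if $1<t<\infty$.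
   Context: Modified lattice: the planar graph with vertex set $\mathbb Z^2$ whose edges are the horizontal unit segments, the vertical unit segments, and the diagonal segments of slope $-1$ joining $(i,j+1)$ and $(i+1,j)$. Words $\omega_t$: for reduced $t=a/b\in(0,\infty)$, let $L_t$ be the segment from $(0,0)$ to $(b,a)$, oriented from $(0,0)$ to $(b,a)$. List the edges of the modified lattice whose relative interior meets $L_t$, in the order of the intersection points along $L_t$. A horizontal (resp. diagonal, vertical) edge contributes $x$ (resp. $y$, $z$) if its midpoint is not on the right-hand side of $L_t$ (including lying on $L_t$), and $x^{-1}$ (resp. $y^{-1}$, $z^{-1}$) if its midpoint is on the right-hand side. $\omega_t$ is the concatenation of these letters. Cohn word $c_t$ (a word in the free monoid on $\{p,q,r\}$): for reduced $t=a/b\in(0,\infty)$, consider $L_t$ in the ordinary integer grid of $\mathbb R^2$. Each time $L_t$ meets a grid line, take the lattice point adjacent to that intersection on the right-hand side of the oriented segment (if the intersection is itself a lattice point, that lattice point is recorded). Record these lattice points in order as $P_1=(0,0),P_2,\dots,P_n=(b,a)$, discarding repetitions, and join consecutive points by segments. Each segment of slope $0$, $1$, $\infty$ is assigned the letter $p$, $q$, $r$ respectively; $c_t$ is the sequence of these letters in order. (E.g. $c_{2/5}=p^2qpq$ and $c_{5/2}=qrqr^2$.) *)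

theory Defs
  imports Complex_Main
begin

text \<open>Generators x, y, z; a signed letter (g, True) is g, (g, False) is g inverse.\<close>
datatype gen = GX | GY | GZ
type_synonym sletter = "gen \<times> bool"

text \<open>Edges of the modified lattice: Hor i j joins (i,j),(i+1,j); Vert i j joins (i,j),(i,j+1);
  Diag i j joins (i,j+1),(i+1,j) (slope -1).\<close>
datatype lat_kind = Hor | Diag | Vert
type_synonym edge = "lat_kind \<times> int \<times> int"

fun edge_pt :: "edge \<Rightarrow> real \<Rightarrow> real \<times> real" where
  "edge_pt (Hor, i, j) u = (of_int i + u, of_int j)"
| "edge_pt (Diag, i, j) u = (of_int i + u, of_int j + 1 - u)"
| "edge_pt (Vert, i, j) u = (of_int i, of_int j + u)"

definition Lpt :: "int \<Rightarrow> int \<Rightarrow> real \<Rightarrow> real \<times> real" where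
  "Lpt a b s = (s * of_int b, s * of_int a)"

definition on_right :: "int \<Rightarrow> int \<Rightarrow> real \<times> real \<Rightarrow> bool" where
  "on_right a b P \<longleftrightarrow> of_int b * snd P - of_int a * fst P < 0"

definition meets_at :: "int \<Rightarrow> int \<Rightarrow> edge \<Rightarrow> real \<Rightarrow> bool" where
  "meets_at a b e s \<longleftrightarrow> 0 \<le> s \<and> s \<le> 1 \<and> (\<exists>u. 0 < u \<and> u < 1 \<and> Lpt a b s = edge_pt e u)"

definition crossed_edges :: "int \<Rightarrow> int \<Rightarrow> edge set" where
  "crossed_edges a b = {e. \<exists>s. meets_at a b e s}"

definition hit_param :: "int \<Rightarrow> int \<Rightarrow> edge \<Rightarrow> real" where
  "hit_param a b e = (THE s. meets_at a b e s)"

fun kind_gen :: "lat_kind \<Rightarrow> gen" where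
  "kind_gen Hor = GX" | "kind_gen Diag = GY" | "kind_gen Vert = GZ"

definition edge_letter :: "int \<Rightarrow> int \<Rightarrow> edge \<Rightarrow> sletter" where
  "edge_letter a b e = (kind_gen (fst e), \<not> on_right a b (edge_pt e (1/2)))"

definition omega_edges :: "int \<Rightarrow> int \<Rightarrow> edge list" where
  "omega_edges a b = (THE es. set es = crossed_edges a b \<and>
      sorted_wrt (\<lambda>e f. hit_param a b e < hit_param a b f) es)"

definition omega_ab :: "int \<Rightarrow> int \<Rightarrow> sletter list" where
  "omega_ab a b = map (edge_letter a b) (omega_edges a b)"

definition omega :: "rat \<Rightarrow> sletter list" where
  "omega t = (case quotient_of t of (a, b) \<Rightarrow> omega_ab a b)"

datatype cletter = Cp | Cq | Cr

definition grid_params :: "int \<Rightarrow> int \<Rightarrow> real set" where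
  "grid_params a b = {s. 0 \<le> s \<and> s \<le> 1 \<and> (s * of_int b \<in> \<int> \<or> s * of_int a \<in> \<int>)}"

text \<open>The lattice point recorded at the intersection with parameter s: among the two lattice
  points adjacent to the intersection on the grid line, the one on the right-hand side, or the
  intersection itself if it is a lattice point.\<close>
definition rec_pt :: "int \<Rightarrow> int \<Rightarrow> real \<Rightarrow> int \<times> int" where
  "rec_pt a b s = (let P = Lpt a b s;
     C = (if fst P \<in> \<int> then {(\<lfloor>fst P\<rfloor>, \<lfloor>snd P\<rfloor>), (\<lfloor>fst P\<rfloor>, \<lceil>snd P\<rceil>)}
          else {(\<lfloor>fst P\<rfloor>, \<lfloor>snd P\<rfloor>), (\<lceil>fst P\<rceil>, \<lfloor>snd P\<rfloor>)})
   in THE Q. Q \<in> C \<and> ((of_int (fst Q), of_int (snd Q)) = P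
                        \<or> on_right a b (of_int (fst Q), of_int (snd Q))))"

definition cohn_points :: "int \<Rightarrow> int \<Rightarrow> (int \<times> int) list" where
  "cohn_points a b = remdups_adj (map (rec_pt a b) (sorted_list_of_set (grid_params a b)))"

definition seg_letter :: "int \<times> int \<Rightarrow> int \<times> int \<Rightarrow> cletter option" where
  "seg_letter P Q = (let dx = fst Q - fst P; dy = snd Q - snd P in
     if dy = 0 \<and> dx \<noteq> 0 then Some Cp
     else if dx = dy \<and> dx \<noteq> 0 then Some Cq
     else if dx = 0 \<and> dy \<noteq> 0 then Some Cr
     else None)"

definition cohn_ab :: "int \<Rightarrow> int \<Rightarrow> cletter list option" where
  "cohn_ab a b = (let ps = cohn_points a b in
     those (map (\<lambda>(P, Q). seg_letter P Q) (zip ps (tl ps))))"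

definition cohn_word :: "rat \<Rightarrow> cletter list option" where
  "cohn_word t = (case quotient_of t of (a, b) \<Rightarrow> cohn_ab a b)"

definition between_blocks :: "('a \<Rightarrow> bool) \<Rightarrow> 'a list \<Rightarrow> 'a list list" where
  "between_blocks P xs = (let ps = filter (\<lambda>i. P (xs ! i)) [0..<length xs] in
     map (\<lambda>(i, j). take (j - Suc i) (drop (Suc i) xs)) (zip ps (tl ps)))"

fun block_lt :: "sletter list \<Rightarrow> cletter option" where
  "block_lt [(GY, _)] = Some Cp"
| "block_lt [(GY, _), (GX, _), (GY, _)] = Some Cq"
| "block_lt _ = None"

fun block_gt :: "sletter list \<Rightarrow> cletter option" where
  "block_gt [(GY, _), (GZ, _), (GY, _)] = Some Cq"
| "block_gt [(GY, _)] = Some Cr"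
| "block_gt _ = None"

definition w_word :: "rat \<Rightarrow> cletter list option" where
  "w_word t = (if t < 1
     then those (map block_lt (between_blocks (\<lambda>l. fst l = GZ) (omega t)))
     else those (map block_gt (between_blocks (\<lambda>l. fst l = GX) (omega t))))"

end

theory Submission
  imports Defs
begin

(*
  Let t = a/b with 0 < a < b; the case t > 1 is the transposed picture, which exchanges
  horizontal and vertical edges. Between x = i and x = i + 1 the segment L_t runs in the row
  of height floor (i a / b) and either stays in it, crossing one diagonal edge, or climbs into
  the next row, crossing a diagonal, a horizontal and a diagonal edge. The vertical edges
  therefore cut omega_t into one block y or y x y per column, and w records which of the
  interior columns 1, ..., b - 2 climb.
  The lattice points recorded for c_t are (i, floor (i a / b)), so the letter of c_t for an
  interior column i is q exactly when the column climbs. The first letter is p because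
  floor (a / b) = 0, and the last one is q because L_t rises to the lattice point (b, a) in the
  last column. For t > 1 the recorded points are (ceiling (i a / b), i) instead, which turns
  the first letter into q and the last one into r.
*)

section \<open>The floor and ceiling of i a / b\<close>

definition line_floor :: "int \<Rightarrow> int \<Rightarrow> int \<Rightarrow> int" where
  "line_floor a b i = i * a div b"

definition line_ceiling :: "int \<Rightarrow> int \<Rightarrow> int \<Rightarrow> int" where
  "line_ceiling a b i = - (- (i * a) div b)"

lemma line_floor_bounds:
  assumes "0 < b"
  shows "b * line_floor a b i \<le> i * a" "i * a < b * (line_floor a b i + 1)"
proof -
  have "i * a = b * line_floor a b i + i * a mod b"
    unfolding line_floor_def by (simp add: mult.commute)
  moreover have "0 \<le> i * a mod b" "i * a mod b < b" using assms by simp_all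
  ultimately show "b * line_floor a b i \<le> i * a" "i * a < b * (line_floor a b i + 1)"
    by (simp_all add: distrib_left)
qed

lemma le_line_floor_iff:
  assumes "0 < b" shows "j \<le> line_floor a b i \<longleftrightarrow> b * j \<le> i * a"
proof
  assume "j \<le> line_floor a b i"
  then have "b * j \<le> b * line_floor a b i" using assms by simp
  then show "b * j \<le> i * a" using line_floor_bounds(1)[where a=a and b=b and i=i] assms by linarith
next
  assume "b * j \<le> i * a"
  then have "b * j < b * (line_floor a b i + 1)"
    using line_floor_bounds(2)[where a=a and b=b and i=i] assms by linarith
  then show "j \<le> line_floor a b i" using assms by simp
qed

lemma line_floor_less_iff: "0 < b \<Longrightarrow> line_floor a b i < j \<longleftrightarrow> i * a < b * j"
  using le_line_floor_iff[of b j a i] by auto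

lemma line_floor_eqI: "0 < b \<Longrightarrow> b * j \<le> i * a \<Longrightarrow> i * a < b * (j + 1) \<Longrightarrow> line_floor a b i = j"
  using le_line_floor_iff[of b j a i] line_floor_less_iff[of b a i "j + 1"] by simp

lemma line_floor_mono: "0 < b \<Longrightarrow> 0 \<le> a \<Longrightarrow> i \<le> i' \<Longrightarrow> line_floor a b i \<le> line_floor a b i'"
  unfolding line_floor_def by (intro zdiv_mono1 mult_right_mono)

lemma line_floor_step:
  assumes "0 < b" "a \<le> b" shows "line_floor a b (i + 1) \<le> line_floor a b i + 1"
proof -
  have "i * a < b * (line_floor a b i + 1)" using assms(1) by (rule line_floor_bounds(2))
  then have "(i + 1) * a < b * (line_floor a b i + 1 + 1)"
    using assms(2) by (simp add: algebra_simps)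
  then have "line_floor a b (i + 1) < line_floor a b i + 1 + 1"
    by (simp only: line_floor_less_iff[OF assms(1)])
  then show ?thesis by simp
qed

lemma line_floor_0 [simp]: "line_floor a b 0 = 0"
  by (simp add: line_floor_def)

lemma line_floor_denom: "0 < b \<Longrightarrow> line_floor a b b = a"
  by (simp add: line_floor_def)

lemma line_floor_1: "0 \<le> a \<Longrightarrow> a < b \<Longrightarrow> line_floor a b 1 = 0"
  by (simp add: line_floor_def)

lemma line_floor_nonneg: "0 < b \<Longrightarrow> 0 \<le> a \<Longrightarrow> 0 \<le> i \<Longrightarrow> 0 \<le> line_floor a b i"
  by (simp add: line_floor_def pos_imp_zdiv_nonneg_iff)

lemma line_floor_pred_denom: "0 < a \<Longrightarrow> a \<le> b \<Longrightarrow> line_floor a b (b - 1) = a - 1"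
  by (rule line_floor_eqI) (simp_all add: algebra_simps)

lemma coprime_not_dvd_mult:
  fixes a b i :: int
  assumes "coprime a b" "0 < i" "i < b"
  shows "\<not> b dvd i * a"
  using assms coprime_dvd_mult_left_iff[of b a i] zdvd_imp_le[of b i]
  by (auto simp: coprime_commute)

lemma line_floor_strict:
  assumes "0 < b" "coprime a b" "0 < i" "i < b"
  shows "b * line_floor a b i < i * a"
proof -
  have "b * line_floor a b i \<noteq> i * a"
    using coprime_not_dvd_mult[OF assms(2-4)] by (metis dvd_triv_left)
  then show ?thesis using line_floor_bounds(1)[OF assms(1)] by (simp add: order_le_neq_trans)
qed

lemma line_ceiling_eq_floor: "b dvd i * a \<Longrightarrow> line_ceiling a b i = line_floor a b i"
  unfolding line_ceiling_def line_floor_def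
  by (elim dvdE) (cases "b = 0", simp_all flip: mult_minus_right)

lemma line_ceiling_eq_floor_plus_1:
  "0 < b \<Longrightarrow> \<not> b dvd i * a \<Longrightarrow> line_ceiling a b i = line_floor a b i + 1"
  by (simp add: line_ceiling_def line_floor_def zdiv_zminus1_eq_if dvd_eq_mod_eq_0)

lemma those_map_Some: "those (map (\<lambda>x. Some (f x)) xs) = Some (map f xs)"
  by (induction xs) auto

lemma upt_0_split_ends:
  assumes "2 \<le> n" shows "[0..<n] = 0 # [1..<n - 1] @ [n - 1]"
proof -
  obtain m where "n = Suc (Suc m)" using assms by (metis add_2_eq_Suc le_Suc_ex)
  then show ?thesis by (simp add: upt_conv_Cons)
qed

lemma remdups_adj_Cons_replicate: "remdups_adj (x # replicate k x @ ys) = remdups_adj (x # ys)"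
  by (induction k) auto

lemma remdups_adj_runs:
  assumes "m \<le> n"
    and "\<And>i. m \<le> i \<Longrightarrow> i < n \<Longrightarrow> g i \<noteq> g (Suc i)"
    and "\<And>i. m \<le> i \<Longrightarrow> i < n \<Longrightarrow> \<exists>k l. B i = replicate k (g i) @ replicate (Suc l) (g (Suc i))"
  shows "remdups_adj (g m # concat (map B [m..<n])) = map g [m..<Suc n]"
  using assms
proof (induction "n - m" arbitrary: m)
  case 0
  then show ?case by simp
next
  case (Suc d)
  then have "m < n" by simp
  then obtain k l where B: "B m = replicate k (g m) @ replicate (Suc l) (g (Suc m))"
    using Suc.prems(3) by blast
  define rest where "rest = concat (map B [Suc m..<n])"
  have "remdups_adj (g m # concat (map B [m..<n]))
      = remdups_adj (g m # g (Suc m) # replicate l (g (Suc m)) @ rest)"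
    using \<open>m < n\<close> by (simp add: upt_conv_Cons B rest_def remdups_adj_Cons_replicate)
  also have "\<dots> = g m # remdups_adj (g (Suc m) # rest)"
    using Suc.prems(2)[of m] \<open>m < n\<close> by (simp add: remdups_adj_Cons_replicate)
  also have "remdups_adj (g (Suc m) # rest) = map g [Suc m..<Suc n]"
    unfolding rest_def using Suc by (intro Suc.hyps) auto
  finally show ?case using \<open>m < n\<close> by (simp add: upt_conv_Cons)
qed

lemma sorted_wrt_concat_separated:
  fixes f :: "'a \<Rightarrow> real" and lo :: "nat \<Rightarrow> real"
  assumes "\<And>k. k < n \<Longrightarrow> sorted_wrt (\<lambda>x y. f x < f y) (F k)"
    and "\<And>k x. k < n \<Longrightarrow> x \<in> set (F k) \<Longrightarrow> lo k < f x \<and> f x \<le> lo (Suc k)"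
    and "mono lo"
  shows "sorted_wrt (\<lambda>x y. f x < f y) (concat (map F [0..<n]))"
  using assms(1,2)
proof (induction n)
  case (Suc n)
  have "f x < f y" if "x \<in> set (concat (map F [0..<n]))" "y \<in> set (F n)" for x y
  proof -
    from that(1) obtain k where k: "k < n" "x \<in> set (F k)" by auto
    have "f x \<le> lo (Suc k)" using Suc.prems(2)[of k x] k by simp
    also have "\<dots> \<le> lo n" using k assms(3) by (simp add: monoD)
    also have "\<dots> < f y" using Suc.prems(2)[of n y] that(2) by simp
    finally show "f x < f y" .
  qed
  then show ?case using Suc by (simp add: sorted_wrt_append)
qed simp

definition marked_positions :: "('a \<Rightarrow> bool) \<Rightarrow> 'a list \<Rightarrow> nat list" where
  "marked_positions P xs = filter (\<lambda>i. P (xs ! i)) [0..<length xs]"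

definition segments_between :: "'a list \<Rightarrow> nat list \<Rightarrow> 'a list list" where
  "segments_between xs ps = map (\<lambda>(i, j). take (j - Suc i) (drop (Suc i) xs)) (zip ps (tl ps))"

lemma between_blocks_eq_segments:
  "between_blocks P xs = segments_between xs (marked_positions P xs)"
  unfolding between_blocks_def segments_between_def marked_positions_def Let_def ..

lemma marked_positions_append:
  "marked_positions P (xs @ ys)
    = marked_positions P xs @ map ((+) (length xs)) (marked_positions P ys)"
proof -
  have "map ((+) (length xs)) [0..<length ys] = [length xs..<length xs + length ys]"
    by (induction ys rule: rev_induct) auto
  then have "[0..<length (xs @ ys)] = [0..<length xs] @ map ((+) (length xs)) [0..<length ys]"
    by (simp add: upt_add_eq_append[of 0])
  moreover have "filter (\<lambda>i. P ((xs @ ys) ! i)) [0..<length xs]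
      = filter (\<lambda>i. P (xs ! i)) [0..<length xs]"
    by (rule filter_cong) (auto simp: nth_append)
  ultimately show ?thesis
    unfolding marked_positions_def by (simp add: filter_map comp_def nth_append)
qed

lemma marked_positions_unmarked: "\<forall>x\<in>set xs. \<not> P x \<Longrightarrow> marked_positions P xs = []"
  unfolding marked_positions_def by (auto simp: filter_empty_conv)

lemma segments_between_shift:
  "segments_between (pre @ ys) (map ((+) (length pre)) ps) = segments_between ys ps"
proof -
  have "zip (map ((+) (length pre)) ps) (tl (map ((+) (length pre)) ps))
      = map (\<lambda>(i, j). (length pre + i, length pre + j)) (zip ps (tl ps))"
    by (simp add: map_tl[symmetric] zip_map_map)
  then show ?thesis unfolding segments_between_def
    by (auto intro!: map_cong simp: drop_append)
qed

lemma between_blocks_unmarked_prefix: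
  "\<forall>x\<in>set xs. \<not> P x \<Longrightarrow> between_blocks P (xs @ ys) = between_blocks P ys"
  unfolding between_blocks_eq_segments marked_positions_append
  using marked_positions_unmarked[of xs P] segments_between_shift by simp

lemma between_blocks_unmarked: "\<forall>x\<in>set xs. \<not> P x \<Longrightarrow> between_blocks P xs = []"
  using between_blocks_unmarked_prefix[of xs P "[]"] by (simp add: between_blocks_def)

lemma between_blocks_single_mark:
  "P z \<Longrightarrow> \<forall>x\<in>set xs. \<not> P x \<Longrightarrow> between_blocks P (z # xs) = []"
  using marked_positions_append[of P "[z]" xs] marked_positions_unmarked[of xs P]
  by (simp add: between_blocks_eq_segments marked_positions_def segments_between_def)

lemma between_blocks_Cons_block:
  assumes "P z" "\<forall>x\<in>set xs. \<not> P x" "P z'"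
  shows "between_blocks P (z # xs @ z' # ys) = xs # between_blocks P (z' # ys)"
proof -
  let ?n = "Suc (length xs)"
  have z': "marked_positions P (z' # ys) = 0 # map Suc (marked_positions P ys)"
    using marked_positions_append[of P "[z']" ys] assms(3) by (simp add: marked_positions_def)
  have "marked_positions P ((z # xs) @ (z' # ys)) = 0 # map ((+) ?n) (marked_positions P (z' # ys))"
    unfolding marked_positions_append using assms marked_positions_unmarked[of xs P]
      marked_positions_append[of P "[z]" xs] by (simp add: marked_positions_def)
  then have "segments_between (z # xs @ z' # ys) (marked_positions P (z # xs @ z' # ys))
      = xs # segments_between ((z # xs) @ (z' # ys)) (map ((+) ?n) (marked_positions P (z' # ys)))"
    unfolding z' by (simp add: segments_between_def)
  then show ?thesis
    unfolding between_blocks_eq_segments by (metis length_Cons segments_between_shift)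
qed

lemma between_blocks_chain:
  assumes "\<And>k x. x \<in> set (f k) \<Longrightarrow> \<not> P x" "\<And>k. P (s k)" "P z"
  shows "between_blocks P (z # concat (map (\<lambda>k. f k @ [s k]) [m..<M]) @ f M) = map f [m..<M]"
  using assms(3)
proof (induction "M - m" arbitrary: m z)
  case 0
  then show ?case using between_blocks_single_mark[of P z "f M"] assms(1) by auto
next
  case (Suc d)
  then have u: "[m..<M] = m # [Suc m..<M]" by (simp add: upt_conv_Cons)
  have "between_blocks P (z # concat (map (\<lambda>k. f k @ [s k]) [m..<M]) @ f M)
      = f m # between_blocks P (s m # concat (map (\<lambda>k. f k @ [s k]) [Suc m..<M]) @ f M)"
    unfolding u using between_blocks_Cons_block[of P z "f m" "s m"] Suc.prems assms(1,2) by simp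
  also have "\<dots> = f m # map f [Suc m..<M]"
    using Suc.hyps(1)[of "Suc m" "s m"] Suc.hyps(2) assms(2) by simp
  finally show ?case unfolding u by simp
qed

lemma between_blocks_separated:
  assumes "\<And>k x. x \<in> set (f k) \<Longrightarrow> \<not> P x" "\<And>k. P (s k)"
  shows "between_blocks P (concat (map (\<lambda>k. f k @ (if k + 1 < N then [s k] else [])) [0..<N]))
    = map f [1..<N - 1]"
proof (cases "N < 2")
  case True
  then have "concat (map (\<lambda>k. f k @ (if k + 1 < N then [s k] else [])) [0..<N])
      = concat (map f [0..<N])"
    by (cases N) auto
  then show ?thesis using True assms(1) by (simp add: between_blocks_unmarked)
next
  case False
  then have u: "[0..<N] = 0 # [1..<N - 1] @ [N - 1]" by (simp add: upt_0_split_ends)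
  have "concat (map (\<lambda>k. f k @ (if k + 1 < N then [s k] else [])) [0..<N])
      = f 0 @ s 0 # concat (map (\<lambda>k. f k @ [s k]) [1..<N - 1]) @ f (N - 1)"
    unfolding u using False by (auto intro!: arg_cong[where f = concat] map_cong)
  then show ?thesis
    using between_blocks_unmarked_prefix[of "f 0" P] between_blocks_chain[of f P s "s 0" 1 "N - 1"]
      assms
    by simp
qed

section \<open>The columns crossed by the segment\<close>

(* L_t crosses a horizontal grid line strictly between x = i and x = i + 1. At i = b - 1 the
   floor also increases, but there L_t ends in the lattice point (b, a). *)
definition column_climbs :: "int \<Rightarrow> int \<Rightarrow> int \<Rightarrow> bool" where
  "column_climbs a b i \<longleftrightarrow> i + 1 < b \<and> line_floor a b (i + 1) = line_floor a b i + 1"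

lemma horizontal_crossing_column:
  assumes "0 < a" "a < b" "0 \<le> j" "j \<le> a" "i * a < j * b" "j * b < (i + 1) * a"
  shows "0 \<le> i" "column_climbs a b i" "j = line_floor a b i + 1"
proof -
  have "0 < (i + 1) * a" using assms(1,2,3,6) mult_nonneg_nonneg[of j b] by linarith
  then show "0 \<le> i" using assms(1) by (simp add: zero_less_mult_iff)
  have b: "0 < b" using assms(1,2) by simp
  have below: "line_floor a b i < j"
    using assms(5) line_floor_less_iff[OF b] by (simp add: mult.commute)
  have above: "j \<le> line_floor a b (i + 1)"
    using assms(6) le_line_floor_iff[OF b] by (simp add: mult.commute)
  have "line_floor a b (i + 1) \<le> line_floor a b i + 1"
    using b assms(2) by (simp add: line_floor_step)
  with below above show "j = line_floor a b i + 1" by simp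
  have step: "line_floor a b (i + 1) = line_floor a b i + 1"
    using below above \<open>line_floor a b (i + 1) \<le> line_floor a b i + 1\<close> by simp
  have "j * b \<le> a * b" using assms(4) b by simp
  then have "i * a < a * b" using assms(5) by linarith
  then have "i < b" using assms(1) by (simp add: mult.commute)
  have "i + 1 < b"
  proof (rule ccontr)
    assume "\<not> i + 1 < b"
    with \<open>i < b\<close> have "i + 1 = b" by simp
    then have "j < a" using assms(1,6) b by (simp add: mult.commute)
    then show False using step \<open>j = line_floor a b i + 1\<close> \<open>i + 1 = b\<close> line_floor_denom[OF b] by simp
  qed
  with step show "column_climbs a b i" unfolding column_climbs_def by simp
qed

lemma vertical_crossing_column:
  assumes "0 < b" "0 \<le> i" "i \<le> b" "j * b < i * a" "i * a < (j + 1) * b"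
  shows "0 < i" "i < b" "line_floor a b i = j"
proof -
  show j: "line_floor a b i = j"
    using assms(1,4,5) by (intro line_floor_eqI) (simp_all add: mult.commute)
  show "0 < i" using assms(2,4) j by (cases "i = 0") auto
  show "i < b"
    using assms(1,3,4) j line_floor_denom[OF assms(1), of a]
    by (cases "i = b") (auto simp: mult.commute)
qed

lemma diagonal_crossing_column:
  assumes "0 < a" "a \<le> b" "0 \<le> i + j + 1" "i + j + 1 \<le> a + b"
    and "i * a < (j + 1) * b" "j * b < (i + 1) * a"
  shows "0 \<le> i" "i < b"
    "j = line_floor a b i \<or> (j = line_floor a b i + 1 \<and> column_climbs a b i)"
proof -
  have b: "0 < b" using assms(1,2) by simp
  show "0 \<le> i"
  proof (rule ccontr)
    assume "\<not> 0 \<le> i"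
    then have "(i + 1) * a \<le> 0" using assms(1) by (simp add: mult_nonpos_nonneg)
    then have "j * b < 0" using assms(6) by linarith
    then have "j < 0" using b by (simp add: mult_less_0_iff)
    then show False using \<open>\<not> 0 \<le> i\<close> assms(3) by simp
  qed
  show "i < b"
  proof (rule ccontr)
    assume "\<not> i < b"
    then have "b * a \<le> i * a" using assms(1) by simp
    then have "a * b < (j + 1) * b" using assms(5) by (simp add: mult.commute)
    then have "a < j + 1" using b by simp
    then show False using \<open>\<not> i < b\<close> assms(4) by simp
  qed
  have below: "line_floor a b i \<le> j"
    using assms(5) line_floor_less_iff[OF b, of a i "j + 1"] by (simp add: mult.commute)
  have above: "j \<le> line_floor a b (i + 1)"
    using assms(6) le_line_floor_iff[OF b] by (simp add: mult.commute)
  have step: "line_floor a b (i + 1) \<le> line_floor a b i + 1"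
    using b assms(2) by (rule line_floor_step)
  show "j = line_floor a b i \<or> (j = line_floor a b i + 1 \<and> column_climbs a b i)"
  proof (cases "j = line_floor a b i")
    case False
    then have j: "j = line_floor a b i + 1" "line_floor a b (i + 1) = line_floor a b i + 1"
      using below above step by simp_all
    have "i + 1 \<noteq> b"
    proof
      assume "i + 1 = b"
      then have "j = a" using j line_floor_denom[OF b] by simp
      then show False using assms(6) \<open>i + 1 = b\<close> by (simp add: mult.commute)
    qed
    then show ?thesis using j \<open>i < b\<close> unfolding column_climbs_def by simp
  qed simp
qed

(* The steep case t = b/a > 1 is treated inside this locale as well, through the lemmas about
   omega_edges b a and cohn_points b a: its picture is the transpose of the one for a/b. *)
locale proper_fraction =
  fixes a b :: int
  assumes pos: "0 < a" and less: "a < b" and coprime: "coprime a b"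
begin

lemma denom_pos: "0 < b"
  using pos less by simp

lemma two_le_denom: "2 \<le> nat b"
  using pos less by simp

lemma line_floor_succ:
  "line_floor a b i \<le> line_floor a b (i + 1) \<and> line_floor a b (i + 1) \<le> line_floor a b i + 1"
  using pos less denom_pos line_floor_mono[of b a i "i + 1"] line_floor_step[of b a i] by simp

lemma line_floor_column_bounds:
  assumes "0 \<le> i" "i < b"
  shows "0 \<le> line_floor a b i" "line_floor a b i \<le> a - 1"
proof -
  show "0 \<le> line_floor a b i" using assms denom_pos pos by (simp add: line_floor_nonneg)
  have "line_floor a b i \<le> line_floor a b (b - 1)"
    using assms denom_pos pos by (intro line_floor_mono) auto
  then show "line_floor a b i \<le> a - 1" using line_floor_pred_denom pos less by simp
qed

lemma line_ceiling_interior: "0 < i \<Longrightarrow> i < b \<Longrightarrow> line_ceiling a b i = line_floor a b i + 1"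
  using coprime_not_dvd_mult[OF coprime] denom_pos by (simp add: line_ceiling_eq_floor_plus_1)

lemma line_ceiling_ends:
  "line_ceiling a b 0 = 0" "line_ceiling a b 1 = 1"
  "line_ceiling a b (b - 1) = a" "line_ceiling a b b = a"
proof -
  show "line_ceiling a b 0 = 0" by (simp add: line_ceiling_def)
  show "line_ceiling a b 1 = 1"
    using line_ceiling_interior[of 1] line_floor_1[of a b] pos less by simp
  show "line_ceiling a b (b - 1) = a"
    using line_ceiling_interior[of "b - 1"] line_floor_pred_denom[of a b] pos less by simp
  show "line_ceiling a b b = a"
    using line_ceiling_eq_floor[of b b a] line_floor_denom[OF denom_pos] by simp
qed

lemma line_ceiling_succ:
  assumes "0 \<le> i" "i < b"
  shows "line_ceiling a b i \<le> line_ceiling a b (i + 1)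
    \<and> line_ceiling a b (i + 1) \<le> line_ceiling a b i + 1"
proof -
  consider "i = 0" | "i + 1 = b" | "0 < i" "i + 1 < b" using assms by linarith
  then show ?thesis
  proof cases
    case 3
    then show ?thesis
      using line_ceiling_interior[of i] line_ceiling_interior[of "i + 1"] line_floor_succ[of i]
      by simp
  qed (use line_ceiling_ends in auto)
qed

lemma climbing_column_crossing:
  assumes "0 \<le> i" "column_climbs a b i"
  shows "0 < i" "i * a < (line_floor a b i + 1) * b" "(line_floor a b i + 1) * b < (i + 1) * a"
proof -
  have climb: "i + 1 < b" "line_floor a b (i + 1) = line_floor a b i + 1"
    using assms(2) unfolding column_climbs_def by simp_all
  show "0 < i" using assms(1) climb(2) line_floor_1[of a b] pos less by (cases "i = 0") simp_all
  show "i * a < (line_floor a b i + 1) * b"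
    using line_floor_bounds(2)[OF denom_pos, where a=a and i=i] by (simp add: mult.commute)
  show "(line_floor a b i + 1) * b < (i + 1) * a"
    using line_floor_strict[OF denom_pos coprime, of "i + 1"] climb assms(1)
    by (simp add: mult.commute)
qed

lemma climbing_column_floor_ceiling:
  assumes "0 \<le> i" "column_climbs a b i"
  shows "line_floor b a (line_floor a b i + 1) = i"
    and "line_ceiling b a (line_floor a b i + 1) = i + 1"
proof -
  let ?j = "line_floor a b i + 1"
  have lt: "i * a < ?j * b" "?j * b < (i + 1) * a"
    using climbing_column_crossing[OF assms] by simp_all
  then show fl: "line_floor b a ?j = i"
    using pos by (intro line_floor_eqI) (simp_all add: mult.commute)
  have "\<not> a dvd ?j * b"
  proof
    assume "a dvd ?j * b"
    then obtain m where "?j * b = a * m" by (elim dvdE)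
    then show False using lt pos by (simp add: mult.commute)
  qed
  then show "line_ceiling b a ?j = i + 1" using fl pos by (simp add: line_ceiling_eq_floor_plus_1)
qed

end

section \<open>The edges crossed by the segment\<close>

lemma frac_less_frac_iff:
  assumes "0 < c" "0 < d"
  shows "real_of_int x / of_int c < of_int y / of_int d \<longleftrightarrow> x * d < y * c"
proof -
  have "real_of_int x / of_int c < of_int y / of_int d \<longleftrightarrow> of_int (x * d) < real_of_int (y * c)"
    using assms by (simp add: field_simps)
  then show ?thesis by (simp only: of_int_less_iff)
qed

fun crosses :: "int \<Rightarrow> int \<Rightarrow> edge \<Rightarrow> bool" where
  "crosses a b (Hor, i, j) \<longleftrightarrow> 0 \<le> j \<and> j \<le> a \<and> i * a < j * b \<and> j * b < (i + 1) * a"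
| "crosses a b (Vert, i, j) \<longleftrightarrow> 0 \<le> i \<and> i \<le> b \<and> j * b < i * a \<and> i * a < (j + 1) * b"
| "crosses a b (Diag, i, j) \<longleftrightarrow>
     0 \<le> i + j + 1 \<and> i + j + 1 \<le> a + b \<and> i * a < (j + 1) * b \<and> j * b < (i + 1) * a"

fun crossing_param :: "int \<Rightarrow> int \<Rightarrow> edge \<Rightarrow> real" where
  "crossing_param a b (Hor, i, j) = of_int j / of_int a"
| "crossing_param a b (Vert, i, j) = of_int i / of_int b"
| "crossing_param a b (Diag, i, j) = of_int (i + j + 1) / of_int (a + b)"

lemma meets_at_iff:
  assumes "0 < a" "0 < b"
  shows "meets_at a b e s \<longleftrightarrow> s = crossing_param a b e \<and> crosses a b e"
proof -
  obtain k i j where e: "e = (k, i, j)" by (cases e rule: prod_cases3)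
  have ab: "0 < a + b" using assms by simp
  show ?thesis
  proof (cases k)
    case Hor
    have s: "s * a = j \<longleftrightarrow> s = j / a" using assms by (auto simp: eq_divide_eq)
    have "meets_at a b e s \<longleftrightarrow> 0 \<le> s \<and> s \<le> 1 \<and> s * a = j \<and> i < s * b \<and> s * b < i + 1"
      unfolding e Hor meets_at_def Lpt_def
      by (auto simp: algebra_simps intro!: exI[of _ "s * b - i"])
    also have "\<dots> \<longleftrightarrow> s = j / a \<and> 0 \<le> j / a \<and> j / a \<le> 1 \<and> i < j / a * b \<and> j / a * b < i + 1"
      by (simp only: s) auto
    finally show ?thesis unfolding e Hor using assms
      by (simp add: field_simps zero_le_divide_iff) (simp flip: of_int_mult of_int_add)
  next
    case Vert
    have s: "s * b = i \<longleftrightarrow> s = i / b" using assms by (auto simp: eq_divide_eq)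
    have "meets_at a b e s \<longleftrightarrow> 0 \<le> s \<and> s \<le> 1 \<and> s * b = i \<and> j < s * a \<and> s * a < j + 1"
      unfolding e Vert meets_at_def Lpt_def
      by (auto simp: algebra_simps intro!: exI[of _ "s * a - j"])
    also have "\<dots> \<longleftrightarrow> s = i / b \<and> 0 \<le> i / b \<and> i / b \<le> 1 \<and> j < i / b * a \<and> i / b * a < j + 1"
      by (simp only: s) auto
    finally show ?thesis unfolding e Vert using assms
      by (simp add: field_simps zero_le_divide_iff) (simp flip: of_int_mult of_int_add)
  next
    case Diag
    let ?n = "real_of_int (i + j + 1)" and ?d = "real_of_int (a + b)"
    have s: "s * ?d = ?n \<longleftrightarrow> s = ?n / ?d" using ab by (auto simp: eq_divide_eq)
    have "meets_at a b e s \<longleftrightarrow> 0 \<le> s \<and> s \<le> 1 \<and> s * ?d = ?n \<and> i < s * b \<and> s * b < i + 1"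
      unfolding e Diag meets_at_def Lpt_def
      by (auto simp: algebra_simps intro!: exI[of _ "s * b - i"])
    also have "\<dots> \<longleftrightarrow> s = ?n / ?d \<and> 0 \<le> ?n / ?d \<and> ?n / ?d \<le> 1 \<and> i < ?n / ?d * b \<and> ?n / ?d * b < i + 1"
      by (simp only: s) auto
    finally show ?thesis unfolding e Diag using ab
      by (simp add: field_simps zero_le_divide_iff del: of_int_add)
        (simp flip: of_int_mult of_int_add, simp add: algebra_simps)
  qed
qed

lemma crossed_edges_eq: "0 < a \<Longrightarrow> 0 < b \<Longrightarrow> crossed_edges a b = {e. crosses a b e}"
  unfolding crossed_edges_def using meets_at_iff by blast

lemma hit_param_eq: "0 < a \<Longrightarrow> 0 < b \<Longrightarrow> crosses a b e \<Longrightarrow> hit_param a b e = crossing_param a b e"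
  unfolding hit_param_def by (rule the_equality) (simp_all add: meets_at_iff)

lemma omega_edges_eqI:
  assumes "0 < a" "0 < b" "set es = {e. crosses a b e}"
    and "sorted_wrt (\<lambda>e f. crossing_param a b e < crossing_param a b f) es"
  shows "omega_edges a b = es"
  unfolding omega_edges_def
proof (rule the_equality)
  let ?h = "hit_param a b"
  have h: "map ?h es = map (crossing_param a b) es"
    using assms(1-3) hit_param_eq by (intro map_cong) auto
  have sorted: "sorted_wrt (<) (map ?h es)"
    unfolding h using assms(4) by (simp add: sorted_wrt_map)
  then show "set es = crossed_edges a b \<and> sorted_wrt (\<lambda>e f. ?h e < ?h f) es"
    using assms(1-3) crossed_edges_eq by (simp add: sorted_wrt_map)
  fix es' assume es': "set es' = crossed_edges a b \<and> sorted_wrt (\<lambda>e f. ?h e < ?h f) es'"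
  then have "sorted_wrt (<) (map ?h es')" by (simp add: sorted_wrt_map)
  then have "map ?h es' = map ?h es"
    using sorted es' assms(1-3) crossed_edges_eq
    by (intro sorted_distinct_set_unique) (auto simp: strict_sorted_iff)
  moreover have "inj_on ?h (set es' \<union> set es)"
    using sorted es' assms(1-3) crossed_edges_eq by (simp add: strict_sorted_iff distinct_map)
  ultimately show "es' = es" using inj_on_map_eq_map by blast
qed

lemma crossing_param_in_column:
  assumes "0 < a" "0 < b" "crosses a b (k, i, j)" "k \<noteq> Vert"
  shows "of_int i / of_int b < crossing_param a b (k, i, j)
    \<and> crossing_param a b (k, i, j) < of_int (i + 1) / of_int b"
proof (cases k)
  case Hor
  then show ?thesis using assms
    by (simp only: crossing_param.simps frac_less_frac_iff) (simp add: algebra_simps)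
next
  case Diag
  have "0 < a + b" using assms(1,2) by simp
  then show ?thesis using Diag assms
    by (simp only: crossing_param.simps frac_less_frac_iff) (simp add: algebra_simps)
qed (use assms in simp)

fun transpose_edge :: "edge \<Rightarrow> edge" where
  "transpose_edge (Hor, i, j) = (Vert, j, i)"
| "transpose_edge (Vert, i, j) = (Hor, j, i)"
| "transpose_edge (Diag, i, j) = (Diag, j, i)"

lemma transpose_edge_involution [simp]: "transpose_edge (transpose_edge e) = e"
  by (cases e rule: transpose_edge.cases) simp_all

lemma crosses_transpose_edge: "crosses a b (transpose_edge e) \<longleftrightarrow> crosses b a e"
  by (cases e rule: transpose_edge.cases) (auto simp: algebra_simps)

lemma crossing_param_transpose_edge: "crossing_param a b (transpose_edge e) = crossing_param b a e"
  by (cases e rule: transpose_edge.cases) (simp_all add: add.commute)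

lemma omega_edges_transpose:
  assumes "0 < a" "0 < b" "set es = {e. crosses b a e}"
    and "sorted_wrt (\<lambda>e f. crossing_param b a e < crossing_param b a f) es"
  shows "omega_edges a b = map transpose_edge es"
proof (rule omega_edges_eqI[OF assms(1,2)])
  show "set (map transpose_edge es) = {e. crosses a b e}"
  proof (intro set_eqI iffI)
    fix e assume "e \<in> set (map transpose_edge es)"
    then show "e \<in> {e. crosses a b e}" using assms(3) crosses_transpose_edge by auto
  next
    fix e assume "e \<in> {e. crosses a b e}"
    then have "transpose_edge e \<in> set es" using assms(3) crosses_transpose_edge[of b a e] by simp
    then show "e \<in> set (map transpose_edge es)"
      using image_eqI[of e transpose_edge "transpose_edge e"] by simp
  qed
  show "sorted_wrt (\<lambda>e f. crossing_param a b e < crossing_param a b f) (map transpose_edge es)"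
    using assms(4) by (simp add: sorted_wrt_map crossing_param_transpose_edge)
qed

definition column_edges :: "int \<Rightarrow> int \<Rightarrow> int \<Rightarrow> edge list" where
  "column_edges a b i =
    (if column_climbs a b i
     then [(Diag, i, line_floor a b i), (Hor, i, line_floor a b i + 1),
           (Diag, i, line_floor a b i + 1)]
     else [(Diag, i, line_floor a b i)])"

definition separator_edges :: "int \<Rightarrow> int \<Rightarrow> int \<Rightarrow> edge list" where
  "separator_edges a b i = (if i + 1 < b then [(Vert, i + 1, line_floor a b (i + 1))] else [])"

definition crossed_edge_list :: "int \<Rightarrow> int \<Rightarrow> edge list" where
  "crossed_edge_list a b =
    concat (map (\<lambda>n. column_edges a b (int n) @ separator_edges a b (int n)) [0..<nat b])"

context proper_fraction
begin

lemma column_edges_cross: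
  assumes "0 \<le> i" "i < b" "e \<in> set (column_edges a b i)"
  shows "crosses a b e" "fst e \<noteq> Vert" "fst (snd e) = i"
proof -
  let ?j = "line_floor a b i"
  have F: "b * ?j \<le> i * a" "i * a < b * (?j + 1)" "0 \<le> ?j" "?j \<le> a - 1"
    using line_floor_bounds[OF denom_pos] line_floor_column_bounds[OF assms(1,2)] by auto
  have "crosses a b (Diag, i, ?j)"
    using F assms(1,2) pos by (simp add: algebra_simps)
  moreover have "crosses a b (Hor, i, ?j + 1) \<and> crosses a b (Diag, i, ?j + 1)"
    if "column_climbs a b i"
  proof -
    have "i + 1 < b" using that unfolding column_climbs_def by simp
    moreover have "(?j + 1) * b < (i + 1) * a"
      using climbing_column_crossing[OF assms(1) that] by simp
    ultimately show ?thesis using F assms(1) by (simp add: algebra_simps)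
  qed
  ultimately show "crosses a b e" "fst e \<noteq> Vert" "fst (snd e) = i"
    using assms(3) unfolding column_edges_def by (auto split: if_splits)
qed

lemma column_edges_sorted:
  assumes "0 \<le> i"
  shows "sorted_wrt (\<lambda>e f. crossing_param a b e < crossing_param a b f) (column_edges a b i)"
proof (cases "column_climbs a b i")
  case True
  let ?j = "line_floor a b i"
  have "(i + ?j + 1) * a < (?j + 1) * (a + b)"
    using line_floor_bounds(2)[OF denom_pos, where a=a and i=i] by (simp add: algebra_simps)
  moreover have "(?j + 1) * (a + b) < (i + (?j + 1) + 1) * a"
    using climbing_column_crossing[OF assms True] by (simp add: algebra_simps)
  ultimately show ?thesis
    using True pos denom_pos unfolding column_edges_def
    by (simp add: frac_less_frac_iff algebra_simps del: of_int_add)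
qed (simp add: column_edges_def)

lemma separator_edges_cross:
  assumes "0 \<le> i" "e \<in> set (separator_edges a b i)"
  shows "crosses a b e \<and> crossing_param a b e = of_int (i + 1) / of_int b"
proof -
  have i: "i + 1 < b" and e: "e = (Vert, i + 1, line_floor a b (i + 1))"
    using assms(2) unfolding separator_edges_def by (auto split: if_splits)
  have "b * line_floor a b (i + 1) < (i + 1) * a"
    using line_floor_strict[OF denom_pos coprime, of "i + 1"] i assms(1) by simp
  moreover have "(i + 1) * a < b * (line_floor a b (i + 1) + 1)"
    using line_floor_bounds(2)[OF denom_pos] .
  ultimately show ?thesis unfolding e using i assms(1) by (simp add: algebra_simps)
qed

lemma column_edges_param:
  assumes "0 \<le> i" "i < b" "e \<in> set (column_edges a b i)"
  shows "crosses a b e \<and> of_int i / of_int b < crossing_param a b e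
    \<and> crossing_param a b e < of_int (i + 1) / of_int b"
proof -
  obtain k j where e: "e = (k, i, j)" using column_edges_cross(3)[OF assms] by (cases e) auto
  have "crosses a b e" "k \<noteq> Vert" using column_edges_cross[OF assms] e by auto
  then show ?thesis using crossing_param_in_column[OF pos denom_pos] e by blast
qed

lemma column_block_cross:
  assumes "0 \<le> i" "i < b" "e \<in> set (column_edges a b i @ separator_edges a b i)"
  shows "crosses a b e \<and> of_int i / of_int b < crossing_param a b e
    \<and> crossing_param a b e \<le> of_int (i + 1) / of_int b"
proof (cases "e \<in> set (column_edges a b i)")
  case True
  then show ?thesis using column_edges_param[OF assms(1,2)] by fastforce
next
  case False
  then have "e \<in> set (separator_edges a b i)" using assms(3) by simp
  moreover have "of_int i / of_int b < real_of_int (i + 1) / of_int b"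
    using denom_pos by (simp add: divide_strict_right_mono)
  ultimately show ?thesis using separator_edges_cross[OF assms(1)] by auto
qed

lemma column_block_sorted:
  assumes "0 \<le> i" "i < b"
  shows "sorted_wrt (\<lambda>e f. crossing_param a b e < crossing_param a b f)
    (column_edges a b i @ separator_edges a b i)"
proof -
  have "crossing_param a b e < crossing_param a b f"
    if "e \<in> set (column_edges a b i)" "f \<in> set (separator_edges a b i)" for e f
    using column_edges_param[OF assms that(1)] separator_edges_cross[OF assms(1) that(2)] by simp
  moreover have
    "sorted_wrt (\<lambda>e f. crossing_param a b e < crossing_param a b f) (separator_edges a b i)"
    unfolding separator_edges_def by simp
  ultimately show ?thesis using column_edges_sorted[OF assms(1)] by (simp add: sorted_wrt_append)
qed

lemma crossed_edge_list_set: "set (crossed_edge_list a b) = {e. crosses a b e}"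
proof (intro set_eqI iffI)
  fix e assume "e \<in> set (crossed_edge_list a b)"
  then obtain n where "n < nat b" "e \<in> set (column_edges a b (int n) @ separator_edges a b (int n))"
    unfolding crossed_edge_list_def by auto
  then show "e \<in> {e. crosses a b e}" using column_block_cross[of "int n" e] by auto
next
  fix e assume "e \<in> {e. crosses a b e}"
  then have e: "crosses a b e" by simp
  have listed: "e \<in> set (crossed_edge_list a b)"
    if "0 \<le> i" "i < b" "e \<in> set (column_edges a b i @ separator_edges a b i)" for i
  proof -
    have "nat i \<in> set [0..<nat b]"
      and "e \<in> set (column_edges a b (int (nat i)) @ separator_edges a b (int (nat i)))"
      using that by simp_all
    then show ?thesis unfolding crossed_edge_list_def set_concat set_map by blast
  qed
  obtain k i j where kij: "e = (k, i, j)" by (cases e rule: prod_cases3)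
  show "e \<in> set (crossed_edge_list a b)"
  proof (cases k)
    case Hor
    then have "0 \<le> i" "column_climbs a b i" "j = line_floor a b i + 1"
      using horizontal_crossing_column[OF pos less, of j i] e kij by auto
    moreover from this have "i < b" unfolding column_climbs_def by simp
    ultimately show ?thesis using listed[of i] kij Hor unfolding column_edges_def by simp
  next
    case Vert
    then have "0 < i" "i < b" "line_floor a b i = j"
      using vertical_crossing_column[OF denom_pos, of i j a] e kij by auto
    then show ?thesis using listed[of "i - 1"] kij Vert unfolding separator_edges_def by simp
  next
    case Diag
    then have "0 \<le> i" "i < b"
      and "j = line_floor a b i \<or> (j = line_floor a b i + 1 \<and> column_climbs a b i)"
      using diagonal_crossing_column[OF pos, of b i j] less e kij by auto
    then show ?thesis using listed[of i] kij Diag unfolding column_edges_def by auto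
  qed
qed

lemma crossed_edge_list_sorted:
  "sorted_wrt (\<lambda>e f. crossing_param a b e < crossing_param a b f) (crossed_edge_list a b)"
  unfolding crossed_edge_list_def
proof (rule sorted_wrt_concat_separated[where lo = "\<lambda>k. of_int (int k) / of_int b"])
  fix k assume "k < nat b"
  then show "sorted_wrt (\<lambda>e f. crossing_param a b e < crossing_param a b f)
      (column_edges a b (int k) @ separator_edges a b (int k))"
    by (intro column_block_sorted) auto
next
  fix k e assume "k < nat b" "e \<in> set (column_edges a b (int k) @ separator_edges a b (int k))"
  then show "of_int (int k) / of_int b < crossing_param a b e
      \<and> crossing_param a b e \<le> of_int (int (Suc k)) / of_int b"
    using column_block_cross[of "int k" e] by (simp add: add.commute)
next
  show "mono (\<lambda>k. real_of_int (int k) / real_of_int b)"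
    using denom_pos by (auto intro!: monoI divide_right_mono)
qed

lemma omega_edges_shallow: "omega_edges a b = crossed_edge_list a b"
  using omega_edges_eqI[OF pos denom_pos crossed_edge_list_set crossed_edge_list_sorted] .

lemma omega_edges_steep: "omega_edges b a = map transpose_edge (crossed_edge_list a b)"
  using omega_edges_transpose[OF denom_pos pos crossed_edge_list_set crossed_edge_list_sorted] .

end

section \<open>The word w\<close>

definition climb_word :: "cletter \<Rightarrow> int \<Rightarrow> int \<Rightarrow> cletter list" where
  "climb_word c a b = map (\<lambda>k. if column_climbs a b (int k) then Cq else c) [1..<nat b - 1]"

lemma fst_edge_letter [simp]: "fst (edge_letter a b e) = kind_gen (fst e)"
  by (simp add: edge_letter_def)

lemma map_crossed_edge_list:
  "map L (crossed_edge_list a b) = concat (map (\<lambda>k. map L (column_edges a b (int k))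
      @ (if k + 1 < nat b then [L (Vert, int k + 1, line_floor a b (int k + 1))] else []))
    [0..<nat b])"
proof -
  have "int k + 1 < b \<longleftrightarrow> k + 1 < nat b" for k by auto
  then show ?thesis
    unfolding crossed_edge_list_def separator_edges_def
      by (simp add: map_concat comp_def if_distrib[where f = "map L"] cong: if_cong)
qed

context proper_fraction
begin

lemma between_blocks_shallow:
  "between_blocks (\<lambda>l. fst l = GZ) (omega_ab a b)
    = map (\<lambda>k. map (edge_letter a b) (column_edges a b (int k))) [1..<nat b - 1]"
  unfolding omega_ab_def omega_edges_shallow map_crossed_edge_list
  by (rule between_blocks_separated) (auto simp: column_edges_def split: if_splits)

lemma between_blocks_steep:
  "between_blocks (\<lambda>l. fst l = GX) (omega_ab b a)
    = map (\<lambda>k. map (edge_letter b a \<circ> transpose_edge) (column_edges a b (int k))) [1..<nat b - 1]"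
  unfolding omega_ab_def omega_edges_steep map_map unfolding map_crossed_edge_list
  by (rule between_blocks_separated) (auto simp: column_edges_def split: if_splits)

lemma w_shallow:
  "those (map block_lt (between_blocks (\<lambda>l. fst l = GZ) (omega_ab a b))) = Some (climb_word Cp a b)"
proof -
  have "block_lt (map (edge_letter a b) (column_edges a b i))
      = Some (if column_climbs a b i then Cq else Cp)" for i
    by (simp add: column_edges_def edge_letter_def)
  then show ?thesis
    unfolding between_blocks_shallow climb_word_def map_map comp_def by (simp add: those_map_Some)
qed

lemma w_steep:
  "those (map block_gt (between_blocks (\<lambda>l. fst l = GX) (omega_ab b a))) = Some (climb_word Cr a b)"
proof -
  have "block_gt (map (edge_letter b a \<circ> transpose_edge) (column_edges a b i))
      = Some (if column_climbs a b i then Cq else Cr)" for i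
    by (simp add: column_edges_def edge_letter_def)
  then show ?thesis
    unfolding between_blocks_steep climb_word_def map_map comp_def by (simp add: those_map_Some)
qed

end

section \<open>The Cohn word\<close>

lemma rec_pt_vertical:
  assumes "0 < a" "0 < b"
  shows "rec_pt a b (of_int X / of_int b) = (X, line_floor a b X)"
proof -
  define y where "y = of_int (X * a) / (of_int b :: real)"
  have P: "Lpt a b (of_int X / of_int b) = (of_int X, y)" using assms by (simp add: Lpt_def y_def)
  have right: "on_right a b (of_int X, c) \<longleftrightarrow> c < y" for c
    using assms by (simp add: on_right_def y_def field_simps)
  have y: "line_floor a b X = \<lfloor>y\<rfloor>" unfolding y_def line_floor_def
    by (rule floor_divide_of_int_eq[symmetric])
  have "of_int \<lceil>y\<rceil> = y \<or> \<not> of_int \<lceil>y\<rceil> < y" by (simp add: not_less le_of_int_ceiling)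
  moreover have "of_int \<lfloor>y\<rfloor> = y \<or> of_int \<lfloor>y\<rfloor> < y" using of_int_floor_le[of y] by linarith
  moreover have "\<lfloor>y\<rfloor> = \<lceil>y\<rceil>" if "of_int \<lceil>y\<rceil> = y" by (metis floor_of_int that)
  ultimately show ?thesis
    unfolding rec_pt_def Let_def P y by (intro the_equality) (auto simp: right)
qed

lemma rec_pt_horizontal:
  assumes "0 < a" "0 < b"
  shows "rec_pt a b (of_int Y / of_int a) = (line_ceiling b a Y, Y)"
proof -
  define x where "x = of_int (Y * b) / (of_int a :: real)"
  have P: "Lpt a b (of_int Y / of_int a) = (x, of_int Y)" using assms by (simp add: Lpt_def x_def)
  have right: "on_right a b (c, of_int Y) \<longleftrightarrow> x < c" for c
    using assms by (simp add: on_right_def x_def field_simps)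
  have x: "line_ceiling b a Y = \<lceil>x\<rceil>" unfolding x_def line_ceiling_def
    by (rule ceiling_divide_eq_div[symmetric])
  show ?thesis
  proof (cases "x \<in> \<int>")
    case True
    then obtain k where "x = of_int k" by (elim Ints_cases)
    then show ?thesis unfolding rec_pt_def Let_def P x by (intro the_equality) auto
  next
    case False
    then have "of_int \<lfloor>x\<rfloor> < x" "x < of_int \<lceil>x\<rceil>"
      by (metis Ints_of_int floor_correct order_le_imp_less_or_eq,
          metis Ints_of_int ceiling_correct order_le_imp_less_or_eq)
    then show ?thesis unfolding rec_pt_def Let_def P x using False
      by (intro the_equality) (auto simp: right)
  qed
qed

lemma grid_params_swap: "grid_params b a = grid_params a b"
  unfolding grid_params_def by auto

lemma unit_grid_coordinate:
  fixes x :: real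
  assumes "0 < c" "0 \<le> x" "x \<le> 1" "x * of_int c = of_int k"
  shows "x = of_int k / of_int c \<and> 0 \<le> k \<and> k \<le> c"
proof -
  have "0 \<le> x * of_int c" "x * of_int c \<le> of_int c"
    using assms(1-3) by (simp_all add: mult_left_le_one_le)
  then show ?thesis using assms(1,4) by (simp add: eq_divide_eq)
qed

definition column_grid_params :: "int \<Rightarrow> int \<Rightarrow> int \<Rightarrow> real list" where
  "column_grid_params a b i =
    (if column_climbs a b i then [of_int (line_floor a b i + 1) / of_int a] else [])
    @ [of_int (i + 1) / of_int b]"

definition grid_param_list :: "int \<Rightarrow> int \<Rightarrow> real list" where
  "grid_param_list a b = 0 # concat (map (\<lambda>n. column_grid_params a b (int n)) [0..<nat b])"

lemma cohn_ab_of_points: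
  assumes "cohn_points a b = map g [0..<Suc n]"
  shows "cohn_ab a b = those (map (\<lambda>i. seg_letter (g i) (g (Suc i))) [0..<n])"
proof -
  have "zip (map g [0..<Suc n]) (tl (map g [0..<Suc n])) = map (\<lambda>i. (g i, g (Suc i))) [0..<n]"
    by (rule nth_equalityI) (auto simp: nth_tl simp del: upt_Suc)
  then show ?thesis unfolding cohn_ab_def Let_def assms by (simp add: comp_def)
qed

lemma seg_letter_right_step:
  "y \<le> y' \<Longrightarrow> y' \<le> y + 1 \<Longrightarrow> seg_letter (x, y) (x + 1, y') = Some (if y' = y then Cp else Cq)"
  by (auto simp: seg_letter_def Let_def)

lemma seg_letter_up_step:
  "x \<le> x' \<Longrightarrow> x' \<le> x + 1 \<Longrightarrow> seg_letter (x, y) (x', y + 1) = Some (if x' = x then Cr else Cq)"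
  by (auto simp: seg_letter_def Let_def)

context proper_fraction
begin

lemma grid_param_vertical:
  assumes "0 \<le> k" "k \<le> b"
  shows "of_int k / of_int b \<in> grid_params a b"
  using assms denom_pos unfolding grid_params_def by simp

lemma climbing_grid_param:
  assumes "0 \<le> i" "i < b" "column_climbs a b i"
  shows "real_of_int i / of_int b < of_int (line_floor a b i + 1) / of_int a"
    "of_int (line_floor a b i + 1) / of_int a < real_of_int (i + 1) / of_int b"
    "of_int (line_floor a b i + 1) / of_int a \<in> grid_params a b"
proof -
  let ?j = "line_floor a b i + 1"
  have "i * a < ?j * b" "?j * b < (i + 1) * a"
    using climbing_column_crossing[OF assms(1,3)] by simp_all
  moreover have "0 \<le> ?j" "?j \<le> a" using line_floor_column_bounds[OF assms(1,2)] by simp_all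
  ultimately show "real_of_int i / of_int b < of_int ?j / of_int a"
    "of_int ?j / of_int a < real_of_int (i + 1) / of_int b" "of_int ?j / of_int a \<in> grid_params a b"
    using pos denom_pos by (simp_all add: frac_less_frac_iff grid_params_def del: of_int_add)
qed

lemma column_grid_params_bounds:
  assumes "0 \<le> i" "i < b" "x \<in> set (column_grid_params a b i)"
  shows "of_int i / of_int b < x \<and> x \<le> of_int (i + 1) / of_int b \<and> x \<in> grid_params a b"
proof -
  have "of_int i / of_int b < real_of_int (i + 1) / of_int b"
    using denom_pos by (simp add: divide_strict_right_mono)
  moreover have "of_int (i + 1) / of_int b \<in> grid_params a b"
    using assms by (intro grid_param_vertical) auto
  ultimately show ?thesis
    using assms(3) climbing_grid_param[OF assms(1,2)] unfolding column_grid_params_def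
    by (auto split: if_splits)
qed

lemma column_grid_params_sorted:
  assumes "0 \<le> i" "i < b"
  shows "sorted_wrt (<) (column_grid_params a b i)"
  using climbing_grid_param(2)[OF assms] by (simp add: column_grid_params_def)

lemma grid_param_list_sorted: "sorted_wrt (<) (grid_param_list a b)"
proof -
  have "sorted_wrt (\<lambda>x y. id x < id y)
      (concat (map (\<lambda>n. column_grid_params a b (int n)) [0..<nat b]))"
  proof (rule sorted_wrt_concat_separated[where lo = "\<lambda>k. of_int (int k) / of_int b"])
    fix k assume "k < nat b"
    then show "sorted_wrt (\<lambda>x y. id x < id y) (column_grid_params a b (int k))"
      using column_grid_params_sorted[of "int k"] by simp
  next
    fix k x assume "k < nat b" "x \<in> set (column_grid_params a b (int k))"
    then show "of_int (int k) / of_int b < id x \<and> id x \<le> of_int (int (Suc k)) / of_int b"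
      using column_grid_params_bounds[of "int k" x] by (simp add: add.commute)
  next
    show "mono (\<lambda>k. real_of_int (int k) / real_of_int b)"
      using denom_pos by (auto intro!: monoI divide_right_mono)
  qed
  moreover have "0 < x"
    if x: "x \<in> set (concat (map (\<lambda>n. column_grid_params a b (int n)) [0..<nat b]))" for x
  proof -
    obtain k where "k < nat b" "x \<in> set (column_grid_params a b (int k))" using x by auto
    then have "of_int (int k) / of_int b < x" using column_grid_params_bounds[of "int k" x] by simp
    moreover have "0 \<le> real_of_int (int k) / of_int b" using denom_pos by simp
    ultimately show "0 < x" by linarith
  qed
  ultimately show ?thesis unfolding grid_param_list_def by simp
qed

lemma column_grid_params_in_list:
  assumes "0 \<le> i" "i < b" "x \<in> set (column_grid_params a b i)"
  shows "x \<in> set (grid_param_list a b)"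
proof -
  have "nat i \<in> set [0..<nat b]" "x \<in> set (column_grid_params a b (int (nat i)))"
    using assms by simp_all
  then have "x \<in> set (concat (map (\<lambda>n. column_grid_params a b (int n)) [0..<nat b]))"
    unfolding set_concat set_map by blast
  then show ?thesis unfolding grid_param_list_def by simp
qed

lemma vertical_grid_param_in_list:
  assumes "0 \<le> k" "k \<le> b"
  shows "of_int k / of_int b \<in> set (grid_param_list a b)"
proof (cases "k = 0")
  case False
  then show ?thesis
    using assms column_grid_params_in_list[of "k - 1"] by (simp add: column_grid_params_def)
qed (simp add: grid_param_list_def)

lemma horizontal_grid_param_in_list:
  assumes "0 \<le> k" "k \<le> a"
  shows "of_int k / of_int a \<in> set (grid_param_list a b)"
proof -
  consider "k = 0" | "k = a" | "0 < k" "k < a" using assms by linarith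
  then show ?thesis
  proof cases
    case 3
    define i where "i = line_floor b a k"
    have "a * i < k * b"
      unfolding i_def using line_floor_strict[OF pos _ 3] coprime by (simp add: coprime_commute)
    moreover have "k * b < a * (i + 1)" unfolding i_def using line_floor_bounds(2)[OF pos] .
    ultimately have "0 \<le> i" "column_climbs a b i" "k = line_floor a b i + 1"
      using horizontal_crossing_column[OF pos less, of k i] assms by (simp_all add: mult.commute)
    moreover from this have "i < b" unfolding column_climbs_def by simp
    ultimately show ?thesis
      using column_grid_params_in_list[of i] by (simp add: column_grid_params_def)
  qed (use vertical_grid_param_in_list[of b] denom_pos pos in \<open>simp_all add: grid_param_list_def\<close>)
qed

lemma grid_param_list_set: "set (grid_param_list a b) = grid_params a b"
proof (intro set_eqI iffI)
  fix x assume "x \<in> set (grid_param_list a b)"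
  then consider "x = 0" | k where "k < nat b" "x \<in> set (column_grid_params a b (int k))"
    unfolding grid_param_list_def by auto
  then show "x \<in> grid_params a b"
    by cases (auto simp: grid_params_def dest: column_grid_params_bounds[rotated 2])
next
  fix x assume x: "x \<in> grid_params a b"
  then have "0 \<le> x" "x \<le> 1" unfolding grid_params_def by auto
  consider k where "x * of_int b = of_int k" | k where "x * of_int a = of_int k"
    using x unfolding grid_params_def by (auto elim: Ints_cases)
  then show "x \<in> set (grid_param_list a b)"
  proof cases
    case (1 k)
    then have "x = of_int k / of_int b" "0 \<le> k" "k \<le> b"
      using unit_grid_coordinate[OF denom_pos \<open>0 \<le> x\<close> \<open>x \<le> 1\<close>] by auto
    then show ?thesis using vertical_grid_param_in_list by simp
  next
    case (2 k)
    then have "x = of_int k / of_int a" "0 \<le> k" "k \<le> a"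
      using unit_grid_coordinate[OF pos \<open>0 \<le> x\<close> \<open>x \<le> 1\<close>] by auto
    then show ?thesis using horizontal_grid_param_in_list by simp
  qed
qed

lemma sorted_list_of_grid_params: "sorted_list_of_set (grid_params a b) = grid_param_list a b"
  using grid_param_list_sorted unfolding grid_param_list_set[symmetric]
  by (simp add: sorted_list_of_set_sort_remdups strict_sorted_iff distinct_remdups_id
      sorted_sort_id)

lemma rec_pt_column_shallow:
  assumes "0 \<le> i" "i < b"
  shows "map (rec_pt a b) (column_grid_params a b i)
    = (if column_climbs a b i then [(i + 1, line_floor a b (i + 1))] else [])
      @ [(i + 1, line_floor a b (i + 1))]"
proof -
  have "rec_pt a b (of_int (line_floor a b i + 1) / of_int a) = (i + 1, line_floor a b (i + 1))"
    if "column_climbs a b i"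
    using rec_pt_horizontal[OF pos denom_pos, of "line_floor a b i + 1"]
      climbing_column_floor_ceiling[OF assms(1) that] that
    unfolding column_climbs_def by simp
  then show ?thesis
    using rec_pt_vertical[OF pos denom_pos, of "i + 1"] unfolding column_grid_params_def by simp
qed

lemma rec_pt_column_steep:
  assumes "0 \<le> i" "i < b"
  shows "map (rec_pt b a) (column_grid_params a b i)
    = (if column_climbs a b i then [(line_ceiling a b i, i)] else [])
      @ [(line_ceiling a b (i + 1), i + 1)]"
proof -
  have "rec_pt b a (of_int (line_floor a b i + 1) / of_int a) = (line_ceiling a b i, i)"
    if "column_climbs a b i"
  proof -
    have "0 < i" "i + 1 < b" using climbing_column_crossing(1)[OF assms(1) that] that
      unfolding column_climbs_def by simp_all
    then have "line_ceiling a b i = line_floor a b i + 1"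
      using coprime_not_dvd_mult[OF coprime] denom_pos by (simp add: line_ceiling_eq_floor_plus_1)
    then show ?thesis
      using rec_pt_vertical[OF denom_pos pos, of "line_floor a b i + 1"]
        climbing_column_floor_ceiling[OF assms(1) that] by simp
  qed
  then show ?thesis
    using rec_pt_horizontal[OF denom_pos pos, of "i + 1"] unfolding column_grid_params_def by simp
qed

lemma cohn_points_shallow:
  "cohn_points a b = map (\<lambda>n. (int n, line_floor a b (int n))) [0..<Suc (nat b)]"
proof -
  let ?g = "\<lambda>n. (int n, line_floor a b (int n))"
  have "rec_pt a b 0 = ?g 0" using rec_pt_vertical[OF pos denom_pos, of 0] by simp
  then have "map (rec_pt a b) (grid_param_list a b)
      = ?g 0 # concat (map (\<lambda>n. map (rec_pt a b) (column_grid_params a b (int n))) [0..<nat b])"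
    unfolding grid_param_list_def by (simp add: map_concat comp_def)
  also have "remdups_adj \<dots> = map ?g [0..<Suc (nat b)]"
  proof (rule remdups_adj_runs)
    fix n assume "0 \<le> n" "n < nat b"
    then have "map (rec_pt a b) (column_grid_params a b (int n))
        = replicate 0 (?g n)
          @ replicate (Suc (if column_climbs a b (int n) then 1 else 0)) (?g (Suc n))"
      using rec_pt_column_shallow[of "int n"] by (simp add: add.commute split: if_split)
    then show "\<exists>k l. map (rec_pt a b) (column_grid_params a b (int n))
        = replicate k (?g n) @ replicate (Suc l) (?g (Suc n))" by blast
  qed simp_all
  finally show ?thesis unfolding cohn_points_def sorted_list_of_grid_params .
qed

lemma cohn_points_steep:
  "cohn_points b a = map (\<lambda>n. (line_ceiling a b (int n), int n)) [0..<Suc (nat b)]"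
proof -
  let ?g = "\<lambda>n. (line_ceiling a b (int n), int n)"
  have "rec_pt b a 0 = ?g 0"
    using rec_pt_horizontal[OF denom_pos pos, of 0] by (simp add: line_ceiling_def)
  then have "map (rec_pt b a) (grid_param_list a b)
      = ?g 0 # concat (map (\<lambda>n. map (rec_pt b a) (column_grid_params a b (int n))) [0..<nat b])"
    unfolding grid_param_list_def by (simp add: map_concat comp_def)
  also have "remdups_adj \<dots> = map ?g [0..<Suc (nat b)]"
  proof (rule remdups_adj_runs)
    fix n assume "0 \<le> n" "n < nat b"
    then have "map (rec_pt b a) (column_grid_params a b (int n))
        = replicate (if column_climbs a b (int n) then 1 else 0) (?g n)
          @ replicate (Suc 0) (?g (Suc n))"
      using rec_pt_column_steep[of "int n"] by (simp add: add.commute)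
    then show "\<exists>k l. map (rec_pt b a) (column_grid_params a b (int n))
        = replicate k (?g n) @ replicate (Suc l) (?g (Suc n))" by blast
  qed simp_all
  finally show ?thesis unfolding cohn_points_def grid_params_swap sorted_list_of_grid_params .
qed

lemma cohn_shallow: "cohn_ab a b = Some ([Cp] @ climb_word Cp a b @ [Cq])"
proof -
  let ?L = "\<lambda>i. if line_floor a b (int i + 1) = line_floor a b (int i) then Cp else Cq"
  have "seg_letter (int i, line_floor a b (int i)) (int (Suc i), line_floor a b (int (Suc i)))
      = Some (?L i)" for i
  proof -
    have "int (Suc i) = int i + 1" by simp
    with line_floor_succ[of "int i"] show ?thesis by (simp only: seg_letter_right_step)
  qed
  then have "cohn_ab a b = Some (map ?L [0..<nat b])"
    using cohn_ab_of_points[OF cohn_points_shallow] by (simp add: those_map_Some)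
  moreover have "?L 0 = Cp" using line_floor_1[of a b] pos less by simp
  moreover have "?L (nat b - 1) = Cq"
    using two_le_denom line_floor_denom[OF denom_pos] line_floor_pred_denom[of a b] pos less
    by (simp add: of_nat_diff)
  moreover have "map ?L [1..<nat b - 1] = climb_word Cp a b"
    unfolding climb_word_def
  proof (intro map_cong refl)
    fix k assume "k \<in> set [1..<nat b - 1]"
    then have "int k + 1 < b" by auto
    with line_floor_succ[of "int k"] show "?L k = (if column_climbs a b (int k) then Cq else Cp)"
      unfolding column_climbs_def by auto
  qed
  ultimately show ?thesis using upt_0_split_ends[OF two_le_denom] by simp
qed

lemma cohn_steep: "cohn_ab b a = Some ([Cq] @ climb_word Cr a b @ [Cr])"
proof -
  let ?c = "\<lambda>i. line_ceiling a b (int i)"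
  let ?L = "\<lambda>i. if ?c (Suc i) = ?c i then Cr else Cq"
  have "seg_letter (?c i, int i) (?c (Suc i), int (Suc i)) = Some (?L i)" if "i < nat b" for i
  proof -
    have "int (Suc i) = int i + 1" by simp
    with line_ceiling_succ[of "int i"] that show ?thesis by (simp only: seg_letter_up_step)
  qed
  then have "cohn_ab b a = those (map (\<lambda>i. Some (?L i)) [0..<nat b])"
    unfolding cohn_ab_of_points[OF cohn_points_steep]
      by (intro arg_cong[where f = those] map_cong) auto
  then have "cohn_ab b a = Some (map ?L [0..<nat b])" by (simp only: those_map_Some)
  moreover have "?L 0 = Cq" using line_ceiling_ends by simp
  moreover have "?L (nat b - 1) = Cr"
    using line_ceiling_ends two_le_denom denom_pos by (simp add: of_nat_diff)
  moreover have "map ?L [1..<nat b - 1] = climb_word Cr a b"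
    unfolding climb_word_def
  proof (intro map_cong refl)
    fix k assume "k \<in> set [1..<nat b - 1]"
    then have "0 < int k" "int k + 1 < b" by auto
    then show "?L k = (if column_climbs a b (int k) then Cq else Cr)"
      using line_ceiling_interior[of "int k"] line_ceiling_interior[of "int k + 1"]
        line_floor_succ[of "int k"]
      unfolding column_climbs_def by (auto simp: add.commute)
  qed
  ultimately show ?thesis using upt_0_split_ends[OF two_le_denom] by simp
qed

end

theorem theorem4p7:
  fixes t :: rat
  assumes "0 < t" and "t \<noteq> 1"
  shows "(t < 1 \<longrightarrow> (\<exists>w. w_word t = Some w \<and> cohn_word t = Some ([Cp] @ w @ [Cq])))
       \<and> (1 < t \<longrightarrow> (\<exists>w. w_word t = Some w \<and> cohn_word t = Some ([Cq] @ w @ [Cr])))"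
proof -
  obtain a b where q: "quotient_of t = (a, b)" by (cases "quotient_of t")
  have b: "0 < b" and coprime: "coprime a b" and t: "t = of_int a / of_int b"
    using quotient_of_denom_pos[OF q] quotient_of_coprime[OF q] quotient_of_div[OF q] by simp_all
  have a: "0 < a" using assms(1) b unfolding t by (simp add: zero_less_divide_iff)
  have words: "omega t = omega_ab a b" "cohn_word t = cohn_ab a b"
    unfolding omega_def cohn_word_def q by simp_all
  show ?thesis
  proof (intro conjI impI)
    assume "t < 1"
    then interpret proper_fraction a b using a b coprime unfolding t by unfold_locales simp_all
    show "\<exists>w. w_word t = Some w \<and> cohn_word t = Some ([Cp] @ w @ [Cq])"
      using w_shallow cohn_shallow words \<open>t < 1\<close> by (simp add: w_word_def)
  next
    assume "1 < t"
    then interpret proper_fraction b a using a b coprime unfolding t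
      by unfold_locales (simp_all add: coprime_commute)
    show "\<exists>w. w_word t = Some w \<and> cohn_word t = Some ([Cq] @ w @ [Cr])"
      using w_steep cohn_steep words \<open>1 < t\<close> by (simp add: w_word_def)
  qed
qed

end
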